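(* With $Z$, $m$ and $a_0,\dots,a_{m-1}$ as below, let $\alpha=(a_0,\dots,a_{m-1})$. Fix $j\in\mathbb{N}$. Then for all $i\ge m-1$, $$H_Z(i,j)=\sum_{k=1}^{j+1}\#\{h\in\{0,\dots,m-1\} : a_h\ge k\}.$$
   Context: $\mathbf{k}$ algebraically closed, $R=\mathbf{k}[x_0,x_1,y_0,y_1]$ bigraded with $\deg x_i=(1,0)$, $\deg y_i=(0,1)$; a point $[a_0:a_1]\times[b_0:b_1]$ has ideal $(a_1x_0-a_0x_1,b_1y_0-b_0y_1)$; a fat point scheme $\{(P_1;m_1),\dots,(P_s;m_s)\}$ has ideal $\bigcap\wp_{P_i}^{m_i}$ and Hilbert function $H_Z(i,j)=\dim_{\mathbf{k}}(R/I_Z)_{(i,j)}$. Here $Z=\{(R_1\times Q_j;m_{1j}) : j=1,\dots,s\}$ with $R_1\in\mathbb{P}^1$ fixed and $Q_1,\dots,Q_s\in\mathbb{P}^1$ distinct, $m=\max_j m_{1j}$, and $a_h=\sum_{j=1}^s(m_{1j}-h)_+$ for $0\le h\le m-1$, with $(n)_+=\max\{0,n\}$. *)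

theory Defs
  imports "HOL-Library.Poly_Mapping" "HOL-Computational_Algebra.Polynomial"
begin

text \<open>The ring R = k[x0,x1,y0,y1] is the subset of polynomials using only variables 0,1,2,3,
  with x0 = var 0, x1 = var 1, y0 = var 2, y1 = var 3.\<close>

type_synonym 'k mpoly = "(nat \<Rightarrow>\<^sub>0 nat) \<Rightarrow>\<^sub>0 'k"

definition mvar :: "nat \<Rightarrow> 'k::comm_ring_1 mpoly" where
  "mvar v = Poly_Mapping.single (Poly_Mapping.single v 1) 1"

definition mconst :: "'k::comm_ring_1 \<Rightarrow> 'k mpoly" where
  "mconst c = Poly_Mapping.single 0 c"

definition msmult :: "'k::comm_ring_1 \<Rightarrow> 'k mpoly \<Rightarrow> 'k mpoly" where
  "msmult c p = Poly_Mapping.map (\<lambda>x. c * x) p"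

definition Rset :: "'k::comm_ring_1 mpoly set" where
  "Rset = {p. \<forall>mon\<in>Poly_Mapping.keys p. Poly_Mapping.keys mon \<subseteq> {0,1,2,3}}"

definition bihom :: "nat \<Rightarrow> nat \<Rightarrow> 'k::comm_ring_1 mpoly set" where
  "bihom i j = {p. \<forall>mon\<in>Poly_Mapping.keys p. Poly_Mapping.keys mon \<subseteq> {0,1,2,3} \<and>
      Poly_Mapping.lookup mon 0 + Poly_Mapping.lookup mon 1 = i \<and> Poly_Mapping.lookup mon 2 + Poly_Mapping.lookup mon 3 = j}"

definition is_ideal :: "'k::comm_ring_1 mpoly set \<Rightarrow> bool" where
  "is_ideal I \<longleftrightarrow> I \<subseteq> Rset \<and> 0 \<in> I \<and> (\<forall>a\<in>I. \<forall>b\<in>I. a + b \<in> I)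
      \<and> (\<forall>r\<in>Rset. \<forall>a\<in>I. r * a \<in> I)"

definition gen_ideal :: "'k::comm_ring_1 mpoly set \<Rightarrow> 'k mpoly set" where
  "gen_ideal S = \<Inter>{I. is_ideal I \<and> S \<subseteq> I}"

definition ideal_mult :: "'k::comm_ring_1 mpoly set \<Rightarrow> 'k mpoly set \<Rightarrow> 'k mpoly set" where
  "ideal_mult I J = gen_ideal {a * b | a b. a \<in> I \<and> b \<in> J}"

fun ideal_pow :: "'k::comm_ring_1 mpoly set \<Rightarrow> nat \<Rightarrow> 'k mpoly set" where
  "ideal_pow I 0 = Rset"
| "ideal_pow I (Suc n) = ideal_mult I (ideal_pow I n)"

text \<open>Ideal of the point [a0:a1] x [b0:b1] of P1 x P1.\<close>
definition point_ideal :: "('k::comm_ring_1 \<times> 'k) \<Rightarrow> ('k \<times> 'k) \<Rightarrow> 'k mpoly set" where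
  "point_ideal A B = gen_ideal
     {mconst (snd A) * mvar 0 - mconst (fst A) * mvar 1,
      mconst (snd B) * mvar 2 - mconst (fst B) * mvar 3}"

text \<open>Ideal of the fat point scheme {(P_j ; m_j) : j in S}, P_j = A_j x B_j.\<close>
definition fat_ideal :: "(nat \<Rightarrow> ('k::comm_ring_1 \<times> 'k) \<times> ('k \<times> 'k)) \<Rightarrow> (nat \<Rightarrow> nat)
    \<Rightarrow> nat set \<Rightarrow> 'k mpoly set" where
  "fat_ideal P mlt S = Rset \<inter> (\<Inter>j\<in>S. ideal_pow (point_ideal (fst (P j)) (snd (P j))) (mlt j))"

text \<open>Hilbert function H(i,j) = dim_k (R/I)_(i,j) = dim_k R_(i,j) - dim_k I_(i,j).\<close>
definition hilbert_fun :: "'k::field mpoly set \<Rightarrow> nat \<Rightarrow> nat \<Rightarrow> nat" where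
  "hilbert_fun I i j = vector_space.dim (msmult :: 'k \<Rightarrow> 'k mpoly \<Rightarrow> 'k mpoly) (bihom i j)
     - vector_space.dim (msmult :: 'k \<Rightarrow> 'k mpoly \<Rightarrow> 'k mpoly) (bihom i j \<inter> I)"

text \<open>Points of P1 given by homogeneous coordinates; equality in P1 is proportionality.\<close>
definition proj_eq :: "('k::field \<times> 'k) \<Rightarrow> ('k \<times> 'k) \<Rightarrow> bool" where
  "proj_eq P Q \<longleftrightarrow> fst P * snd Q = snd P * fst Q"

end

theory Submission
  imports Defs "HOL-Computational_Algebra.Polynomial"
begin

(* Write R1 = [a0:a1] and Q_j = [B0_j:B1_j]. Put ell = a1 x0 - a0 x1, complete it by a linear
   form ell' to a basis of R_(1,0), and (k being infinite) pick an affine chart u of the second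
   factor containing every Q_j. Dehomogenizing sends ell to X and ell' to 1, and identifies
   R_(i,t) with the polynomials sum_(h<=i) c_h(u) X^h with deg c_h <= t. The ideal of R1 x Q_j
   maps into (X, lambda_j), where lambda_j is linear in u and vanishes at Q_j; hence the ideal
   of (R1 x Q_j; mu_j) maps into (X, lambda_j)^mu_j, so c_h is divisible by lambda_j^(mu_j - h).
   The lambda_j are pairwise comaximal, so for f in I_Z every c_h is divisible by
   G_h = prod_j lambda_j^(mu_j - h), a polynomial of degree a_h. Conversely, if a_h <= t the
   forms ell^h ell'^(i-h) G_h(y) g(y) with deg g = t - a_h lie in I_Z. Hence
   dim (I_Z)_(i,t) = sum_(h<=i, a_h<=t) (t + 1 - a_h), i.e. H_Z(i,t) = sum_(h<=i) min a_h (t+1),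
   which for i >= m - 1 is the stated sum, since a_h = 0 for h >= m. *)

lemma msmult_eq_mconst_mult: "msmult c p = mconst c * (p :: 'k::comm_ring_1 mpoly)"
  unfolding msmult_def mconst_def using mult_map_scale_conv_mult[of c p] by (simp add: fun_eq_iff)

lemma mconst_add: "mconst (a + b) = mconst a + (mconst b :: 'k::comm_ring_1 mpoly)"
  by (simp add: mconst_def single_add)

lemma mconst_mult: "mconst (a * b) = mconst a * (mconst b :: 'k::comm_ring_1 mpoly)"
  by (simp add: mconst_def mult_single)

lemma mconst_diff: "mconst (a - b) = mconst a - (mconst b :: 'k::comm_ring_1 mpoly)"
  by (simp add: mconst_def single_diff)

lemma mconst_1 [simp]: "mconst 1 = (1 :: 'k::comm_ring_1 mpoly)"
  by (simp add: mconst_def)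

interpretation mspace: vector_space "msmult :: 'k::field \<Rightarrow> 'k mpoly \<Rightarrow> 'k mpoly"
  by unfold_locales (simp_all add: msmult_eq_mconst_mult mconst_add mconst_mult algebra_simps)

lemma keys_add_monomial:
  "Poly_Mapping.keys (a + b :: nat \<Rightarrow>\<^sub>0 nat) = Poly_Mapping.keys a \<union> Poly_Mapping.keys b"
  by (auto simp: in_keys_iff lookup_add)

lemma Rset_0 [simp]: "0 \<in> Rset"
  by (simp add: Rset_def)

lemma Rset_1 [simp]: "1 \<in> Rset"
  by (simp add: Rset_def)

lemma Rset_add: "p \<in> Rset \<Longrightarrow> q \<in> Rset \<Longrightarrow> p + q \<in> Rset"
  unfolding Rset_def using keys_add[of p q] by blast

lemma Rset_mult: "p \<in> Rset \<Longrightarrow> q \<in> Rset \<Longrightarrow> p * q \<in> Rset"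
  unfolding Rset_def using keys_mult[of p q] by (fastforce simp: keys_add_monomial)

lemma Rset_power: "p \<in> Rset \<Longrightarrow> p ^ n \<in> Rset"
  by (induction n) (simp_all add: Rset_mult)

lemma Rset_prod: "(\<And>x. x \<in> A \<Longrightarrow> f x \<in> Rset) \<Longrightarrow> prod f A \<in> Rset"
  by (induction A rule: infinite_finite_induct) (simp_all add: Rset_mult)


subsection \<open>Bihomogeneous forms\<close>

definition has_bidegree :: "nat \<Rightarrow> nat \<Rightarrow> (nat \<Rightarrow>\<^sub>0 nat) \<Rightarrow> bool" where
  "has_bidegree i j mon \<longleftrightarrow> Poly_Mapping.keys mon \<subseteq> {0, 1, 2, 3} \<and>
     Poly_Mapping.lookup mon 0 + Poly_Mapping.lookup mon 1 = i \<and>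
     Poly_Mapping.lookup mon 2 + Poly_Mapping.lookup mon 3 = j"

lemma bihom_eq: "bihom i j = {p. \<forall>mon \<in> Poly_Mapping.keys p. has_bidegree i j mon}"
  by (simp add: bihom_def has_bidegree_def)

lemma has_bidegree_add:
  "has_bidegree a b m1 \<Longrightarrow> has_bidegree c d m2 \<Longrightarrow> has_bidegree (a + c) (b + d) (m1 + m2)"
  by (auto simp: has_bidegree_def keys_add_monomial lookup_add)

lemma bihom_mult:
  "p \<in> bihom a b \<Longrightarrow> q \<in> bihom c d \<Longrightarrow> a + c = i \<Longrightarrow> b + d = j \<Longrightarrow> p * q \<in> bihom i j"
  unfolding bihom_eq using keys_mult[of p q] has_bidegree_add by fastforce

lemma bihom_0 [simp]: "0 \<in> bihom a b"
  by (simp add: bihom_def)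

lemma bihom_1 [simp]: "1 \<in> bihom 0 0"
  by (simp add: bihom_def)

lemma bihom_mconst: "mconst c \<in> bihom 0 0"
  by (simp add: bihom_def mconst_def)

lemma bihom_add: "p \<in> bihom a b \<Longrightarrow> q \<in> bihom a b \<Longrightarrow> p + q \<in> bihom a b"
  unfolding bihom_eq using keys_add[of p q] by blast

lemma bihom_diff: "p \<in> bihom a b \<Longrightarrow> q \<in> bihom a b \<Longrightarrow> p - q \<in> bihom a b"
  using bihom_add[of p a b "- q"] by (simp add: bihom_def)

lemma bihom_msmult: "p \<in> bihom a b \<Longrightarrow> msmult c p \<in> bihom a b"
  unfolding msmult_eq_mconst_mult by (rule bihom_mult[OF bihom_mconst]) simp_all

lemma bihom_subset_Rset: "bihom a b \<subseteq> Rset"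
  by (auto simp: bihom_def Rset_def)

lemma bihom_power: "p \<in> bihom a b \<Longrightarrow> p ^ n \<in> bihom (n * a) (n * b)"
  by (induction n) (auto intro: bihom_mult)

lemma bihom_prod: "(\<And>x. x \<in> A \<Longrightarrow> f x \<in> bihom 0 (g x)) \<Longrightarrow> prod f A \<in> bihom 0 (sum g A)"
  by (induction A rule: infinite_finite_induct) (auto intro: bihom_mult)

lemma bihom_scaled_var:
  "mconst c * mvar 0 \<in> bihom 1 0" "mconst c * mvar 1 \<in> bihom 1 0"
  "mconst c * mvar 2 \<in> bihom 0 1" "mconst c * mvar 3 \<in> bihom 0 1"
  by (auto simp: bihom_def mconst_def mvar_def mult_single lookup_single)

lemma bihom_var:
  "mvar 0 \<in> bihom 1 0" "mvar 1 \<in> bihom 1 0" "mvar 2 \<in> bihom 0 1" "mvar 3 \<in> bihom 0 1"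
  using bihom_scaled_var[of 1] by simp_all

lemma subspace_bihom: "mspace.subspace (bihom a b)"
  unfolding mspace.subspace_def by (auto intro: bihom_add bihom_msmult)

lemma mvar_power:
  "mvar v ^ n = (Poly_Mapping.single (Poly_Mapping.single v n) 1 :: 'k::comm_ring_1 mpoly)"
  by (induction n) (simp_all add: mvar_def mult_single single_add[symmetric])

lemma monomial_eq_prod_mvar_powers:
  assumes "Poly_Mapping.keys mon \<subseteq> {0, 1, 2, 3}"
  shows "(Poly_Mapping.single mon 1 :: 'k::comm_ring_1 mpoly) =
    (mvar 0 ^ Poly_Mapping.lookup mon 0 * mvar 1 ^ Poly_Mapping.lookup mon 1) *
    (mvar 2 ^ Poly_Mapping.lookup mon 2 * mvar 3 ^ Poly_Mapping.lookup mon 3)"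
proof -
  have "mon = Poly_Mapping.single 0 (Poly_Mapping.lookup mon 0)
      + Poly_Mapping.single 1 (Poly_Mapping.lookup mon 1)
      + Poly_Mapping.single 2 (Poly_Mapping.lookup mon 2)
      + Poly_Mapping.single 3 (Poly_Mapping.lookup mon 3)"
    using assms
    by (intro poly_mapping_eqI) (auto simp: lookup_add lookup_single when_def in_keys_iff)
  then show ?thesis
    by (subst (1) \<open>mon = _\<close>) (simp add: mvar_power mult_single add.assoc)
qed

lemma sum_single_lookup:
  "p = (\<Sum>a \<in> Poly_Mapping.keys p. Poly_Mapping.single a (Poly_Mapping.lookup p a))"
  by (rule poly_mapping_eqI) (simp add: lookup_sum lookup_single when_def in_keys_iff)


lemma is_ideal_Rset: "is_ideal (Rset :: 'k::comm_ring_1 mpoly set)"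
  by (simp add: is_ideal_def Rset_add Rset_mult)

lemma is_ideal_gen_ideal:
  assumes "S \<subseteq> Rset"
  shows "is_ideal (gen_ideal S)"
proof -
  have "Rset \<in> {I. is_ideal I \<and> S \<subseteq> I}"
    using assms is_ideal_Rset by auto
  then have "gen_ideal S \<subseteq> Rset"
    unfolding gen_ideal_def by blast
  then show ?thesis
    unfolding gen_ideal_def is_ideal_def by auto
qed

lemma gen_ideal_subset: "S \<subseteq> gen_ideal S"
  by (auto simp: gen_ideal_def)

lemma gen_ideal_least: "is_ideal J \<Longrightarrow> S \<subseteq> J \<Longrightarrow> gen_ideal S \<subseteq> J"
  by (auto simp: gen_ideal_def)

lemma is_ideal_ideal_pow: "is_ideal I \<Longrightarrow> is_ideal (ideal_pow I n)"
proof (induction n)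
  case 0
  then show ?case by (simp add: is_ideal_Rset)
next
  case (Suc n)
  then have "{a * b |a b. a \<in> I \<and> b \<in> ideal_pow I n} \<subseteq> Rset"
    by (auto simp: is_ideal_def intro!: Rset_mult)
  then show ?case
    by (simp add: ideal_mult_def is_ideal_gen_ideal)
qed

lemma mult_mem_ideal_pow_Suc: "a \<in> I \<Longrightarrow> b \<in> ideal_pow I n \<Longrightarrow> a * b \<in> ideal_pow I (Suc n)"
  using gen_ideal_subset by (fastforce simp: ideal_mult_def)

lemma ideal_pow_antimono:
  assumes "is_ideal I" "n \<le> k"
  shows "ideal_pow I k \<subseteq> ideal_pow I n"
  using assms(2)
proof (induction k)
  case (Suc k)
  have "{a * b |a b. a \<in> I \<and> b \<in> ideal_pow I k} \<subseteq> ideal_pow I k"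
    using is_ideal_ideal_pow[OF assms(1), of k] assms(1) by (auto simp: is_ideal_def)
  then have "ideal_pow I (Suc k) \<subseteq> ideal_pow I k"
    using gen_ideal_least[OF is_ideal_ideal_pow[OF assms(1)]] by (simp add: ideal_mult_def)
  with Suc show ?case by (cases "n = Suc k") auto
qed simp

lemma power_mult_power_mem_ideal_pow:
  assumes "a \<in> I" "b \<in> I"
  shows "a ^ x * b ^ y \<in> ideal_pow I (x + y)"
proof (induction x)
  case 0
  have "b ^ y \<in> ideal_pow I y"
  proof (induction y)
    case (Suc y)
    then show ?case using mult_mem_ideal_pow_Suc[OF assms(2)] by simp
  qed simp
  then show ?case by simp
next
  case (Suc x)
  then show ?case
    using mult_mem_ideal_pow_Suc[OF assms(1)] by (simp add: mult.assoc)
qed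

lemma ideal_pow_subset_filtration:
  assumes "\<And>n. is_ideal (T n)" "Rset \<subseteq> T 0" "I \<subseteq> T 1"
    and "\<And>a b n. a \<in> T 1 \<Longrightarrow> b \<in> T n \<Longrightarrow> a * b \<in> T (Suc n)"
  shows "ideal_pow I n \<subseteq> T n"
proof (induction n)
  case (Suc n)
  then have "{a * b |a b. a \<in> I \<and> b \<in> ideal_pow I n} \<subseteq> T (Suc n)"
    using assms(3,4) by blast
  then show ?case
    by (simp add: ideal_mult_def gen_ideal_least assms(1))
qed (simp add: assms(2))


subsection \<open>Evaluation in two-variable polynomials\<close>

definition monomial_eval :: "(nat \<Rightarrow> 'a::comm_ring_1) \<Rightarrow> (nat \<Rightarrow>\<^sub>0 nat) \<Rightarrow> 'a" where
  "monomial_eval \<sigma> mon = (\<Prod>v \<in> Poly_Mapping.keys mon. \<sigma> v ^ Poly_Mapping.lookup mon v)"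

definition bivariate_eval :: "(nat \<Rightarrow> 'k::comm_ring_1 poly poly) \<Rightarrow> 'k mpoly \<Rightarrow> 'k poly poly" where
  "bivariate_eval \<sigma> p =
    (\<Sum>mon \<in> Poly_Mapping.keys p. [:[:Poly_Mapping.lookup p mon:]:] * monomial_eval \<sigma> mon)"

lemma monomial_eval_superset:
  "finite K \<Longrightarrow> Poly_Mapping.keys mon \<subseteq> K \<Longrightarrow>
    monomial_eval \<sigma> mon = (\<Prod>v \<in> K. \<sigma> v ^ Poly_Mapping.lookup mon v)"
  unfolding monomial_eval_def by (rule prod.mono_neutral_left) (auto simp: in_keys_iff)

lemma monomial_eval_add: "monomial_eval \<sigma> (a + b) = monomial_eval \<sigma> a * monomial_eval \<sigma> b"
proof -
  let ?K = "Poly_Mapping.keys a \<union> Poly_Mapping.keys b"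
  have "monomial_eval \<sigma> (a + b) = (\<Prod>v \<in> ?K. \<sigma> v ^ Poly_Mapping.lookup (a + b) v)"
    by (rule monomial_eval_superset) (use keys_add[of a b] in auto)
  also have "\<dots> = (\<Prod>v \<in> ?K. \<sigma> v ^ Poly_Mapping.lookup a v) *
      (\<Prod>v \<in> ?K. \<sigma> v ^ Poly_Mapping.lookup b v)"
    by (simp add: lookup_add power_add prod.distrib)
  also have "\<dots> = monomial_eval \<sigma> a * monomial_eval \<sigma> b"
    using monomial_eval_superset[of ?K a \<sigma>] monomial_eval_superset[of ?K b \<sigma>] by simp
  finally show ?thesis .
qed

lemma bivariate_eval_superset:
  "finite K \<Longrightarrow> Poly_Mapping.keys p \<subseteq> K \<Longrightarrow>
    bivariate_eval \<sigma> p = (\<Sum>mon \<in> K. [:[:Poly_Mapping.lookup p mon:]:] * monomial_eval \<sigma> mon)"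
  unfolding bivariate_eval_def by (rule sum.mono_neutral_left) (auto simp: in_keys_iff)

lemma const_const_poly_add: "[:[:a + b:]:] = [:[:a:]:] + [:[:b:]:]"
  by simp

lemma bivariate_eval_add: "bivariate_eval \<sigma> (p + q) = bivariate_eval \<sigma> p + bivariate_eval \<sigma> q"
proof -
  let ?K = "Poly_Mapping.keys p \<union> Poly_Mapping.keys q"
  have "bivariate_eval \<sigma> (p + q) =
      (\<Sum>mon \<in> ?K. [:[:Poly_Mapping.lookup (p + q) mon:]:] * monomial_eval \<sigma> mon)"
    by (rule bivariate_eval_superset) (use keys_add[of p q] in auto)
  also have "\<dots> = (\<Sum>mon \<in> ?K. [:[:Poly_Mapping.lookup p mon:]:] * monomial_eval \<sigma> mon)
      + (\<Sum>mon \<in> ?K. [:[:Poly_Mapping.lookup q mon:]:] * monomial_eval \<sigma> mon)"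
    by (simp only: lookup_add const_const_poly_add distrib_right sum.distrib)
  also have "\<dots> = bivariate_eval \<sigma> p + bivariate_eval \<sigma> q"
    using bivariate_eval_superset[of ?K p \<sigma>] bivariate_eval_superset[of ?K q \<sigma>] by simp
  finally show ?thesis .
qed

lemma bivariate_eval_0 [simp]: "bivariate_eval \<sigma> 0 = 0"
  by (simp add: bivariate_eval_def)

lemma bivariate_eval_single:
  "bivariate_eval \<sigma> (Poly_Mapping.single mon c) = [:[:c:]:] * monomial_eval \<sigma> mon"
  by (simp add: bivariate_eval_def)

lemma bivariate_eval_sum: "bivariate_eval \<sigma> (sum f A) = (\<Sum>x \<in> A. bivariate_eval \<sigma> (f x))"
  by (induction A rule: infinite_finite_induct) (simp_all add: bivariate_eval_add)

lemma bivariate_eval_mult: "bivariate_eval \<sigma> (p * q) = bivariate_eval \<sigma> p * bivariate_eval \<sigma> q"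
proof -
  have "p * q = (\<Sum>a \<in> Poly_Mapping.keys p. Poly_Mapping.single a (Poly_Mapping.lookup p a)) *
      (\<Sum>b \<in> Poly_Mapping.keys q. Poly_Mapping.single b (Poly_Mapping.lookup q b))"
    using sum_single_lookup[of p] sum_single_lookup[of q] by simp
  also have "\<dots> = (\<Sum>a \<in> Poly_Mapping.keys p. \<Sum>b \<in> Poly_Mapping.keys q.
      Poly_Mapping.single (a + b) (Poly_Mapping.lookup p a * Poly_Mapping.lookup q b))"
    by (simp add: sum_distrib_left sum_distrib_right mult_single) (rule sum.swap)
  finally have "bivariate_eval \<sigma> (p * q) = (\<Sum>a \<in> Poly_Mapping.keys p. \<Sum>b \<in> Poly_Mapping.keys q.
      [:[:Poly_Mapping.lookup p a:]:] * monomial_eval \<sigma> a *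
      ([:[:Poly_Mapping.lookup q b:]:] * monomial_eval \<sigma> b))"
    by (simp add: bivariate_eval_sum bivariate_eval_single monomial_eval_add algebra_simps)
  also have "\<dots> = bivariate_eval \<sigma> p * bivariate_eval \<sigma> q"
    unfolding bivariate_eval_def sum_product ..
  finally show ?thesis .
qed

lemma bivariate_eval_diff: "bivariate_eval \<sigma> (p - q) = bivariate_eval \<sigma> p - bivariate_eval \<sigma> q"
  using bivariate_eval_add[of \<sigma> "p - q" q] by (simp add: algebra_simps)

lemma bivariate_eval_mconst: "bivariate_eval \<sigma> (mconst c) = [:[:c:]:]"
  by (simp add: mconst_def bivariate_eval_single monomial_eval_def)

lemma bivariate_eval_mvar: "bivariate_eval \<sigma> (mvar v) = \<sigma> v"
  by (simp add: mvar_def bivariate_eval_single monomial_eval_def one_pCons[symmetric])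

lemma bivariate_eval_1 [simp]: "bivariate_eval \<sigma> 1 = 1"
  using bivariate_eval_mconst[of \<sigma> 1] by (simp add: one_pCons)

lemma bivariate_eval_msmult: "bivariate_eval \<sigma> (msmult c p) = smult [:c:] (bivariate_eval \<sigma> p)"
  by (simp add: msmult_eq_mconst_mult bivariate_eval_mult bivariate_eval_mconst)

lemma bivariate_eval_power: "bivariate_eval \<sigma> (p ^ n) = bivariate_eval \<sigma> p ^ n"
  by (induction n) (simp_all add: bivariate_eval_mult)

lemma bivariate_eval_prod: "bivariate_eval \<sigma> (prod f A) = (\<Prod>x \<in> A. bivariate_eval \<sigma> (f x))"
  by (induction A rule: infinite_finite_induct) (simp_all add: bivariate_eval_mult)


lemma span_mult_left:
  fixes T U :: "'k::field mpoly set"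
  assumes "\<And>y. y \<in> T \<Longrightarrow> x * y \<in> mspace.span U" "y \<in> mspace.span T"
  shows "x * y \<in> mspace.span U"
  using assms(2)
proof (induction rule: mspace.span_induct_alt)
  case (step c y1 y2)
  have "x * (msmult c y1 + y2) = msmult c (x * y1) + x * y2"
    by (simp add: msmult_eq_mconst_mult algebra_simps)
  with step assms(1) show ?case
    by (simp add: mspace.span_add mspace.span_scale)
qed (simp add: mspace.span_zero)

lemma span_mult:
  fixes S T U :: "'k::field mpoly set"
  assumes "\<And>x y. x \<in> S \<Longrightarrow> y \<in> T \<Longrightarrow> x * y \<in> mspace.span U"
    and "x \<in> mspace.span S" "y \<in> mspace.span T"
  shows "x * y \<in> mspace.span U"
  using assms(2)
proof (induction rule: mspace.span_induct_alt)
  case (step c x1 x2)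
  have "(msmult c x1 + x2) * y = msmult c (x1 * y) + x2 * y"
    by (simp add: msmult_eq_mconst_mult algebra_simps)
  moreover have "x1 * y \<in> mspace.span U"
    using span_mult_left[OF _ assms(3)] assms(1) step(1) by blast
  ultimately show ?case
    using step by (simp add: mspace.span_add mspace.span_scale)
qed (simp add: mspace.span_zero)

definition binary_monomials :: "'k::comm_ring_1 mpoly \<Rightarrow> 'k mpoly \<Rightarrow> nat \<Rightarrow> 'k mpoly set" where
  "binary_monomials A B n = {A ^ h * B ^ (n - h) | h. h \<le> n}"

lemma mult_mem_span_binary_monomials_Suc:
  fixes A B :: "'k::field mpoly"
  assumes "g \<in> mspace.span {A, B}" "p \<in> mspace.span (binary_monomials A B n)"
  shows "g * p \<in> mspace.span (binary_monomials A B (Suc n))"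
proof (rule span_mult[OF _ assms])
  fix x y assume "x \<in> {A, B}" "y \<in> binary_monomials A B n"
  then obtain h where h: "h \<le> n" "y = A ^ h * B ^ (n - h)" and "x = A \<or> x = B"
    by (auto simp: binary_monomials_def)
  then have "x * y = A ^ Suc h * B ^ (Suc n - Suc h) \<or> x * y = A ^ h * B ^ (Suc n - h)"
    by (auto simp: Suc_diff_le mult_ac)
  then have "x * y \<in> binary_monomials A B (Suc n)"
    using h(1) unfolding binary_monomials_def by fastforce
  then show "x * y \<in> mspace.span (binary_monomials A B (Suc n))"
    by (rule mspace.span_base)
qed

lemma power_mult_power_mem_span_binary_monomials:
  fixes A B :: "'k::field mpoly"
  assumes "g1 \<in> mspace.span {A, B}" "g2 \<in> mspace.span {A, B}"
  shows "g1 ^ a * g2 ^ b \<in> mspace.span (binary_monomials A B (a + b))"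
proof (induction a)
  case 0
  have "(1 :: 'k mpoly) \<in> binary_monomials A B 0"
    by (force simp: binary_monomials_def)
  then have "g2 ^ b \<in> mspace.span (binary_monomials A B b)"
    by (induction b) (auto intro: mspace.span_base mult_mem_span_binary_monomials_Suc[OF assms(2)])
  then show ?case by simp
next
  case (Suc a)
  then show ?case
    using mult_mem_span_binary_monomials_Suc[OF assms(1)] by (simp add: mult.assoc)
qed

lemma inj_on_independent_if_scalars_zero:
  fixes u :: "'i \<Rightarrow> 'k::field mpoly"
  assumes "finite K"
    and zero: "\<And>c. (\<Sum>k \<in> K. msmult (c k) (u k)) = 0 \<Longrightarrow> \<forall>k \<in> K. c k = 0"
  shows "inj_on u K \<and> mspace.independent (u ` K)"
proof
  show inj: "inj_on u K"
  proof (rule inj_onI, rule ccontr)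
    fix k1 k2 assume k: "k1 \<in> K" "k2 \<in> K" "u k1 = u k2" "k1 \<noteq> k2"
    define c where "c k = (if k = k1 then 1 else if k = k2 then - 1 else (0 :: 'k))" for k
    have "(\<Sum>k \<in> K. msmult (c k) (u k)) = (\<Sum>k \<in> {k1, k2}. msmult (c k) (u k))"
      by (rule sum.mono_neutral_right) (use assms(1) k in \<open>auto simp: c_def\<close>)
    also have "\<dots> = 0"
      using k by (simp add: c_def mspace.scale_minus_left)
    finally show False
      using zero[of c] k by (auto simp: c_def)
  qed
  show "mspace.independent (u ` K)"
  proof (rule mspace.independent_if_scalars_zero)
    fix f x assume sum: "(\<Sum>x \<in> u ` K. msmult (f x) x) = 0" and "x \<in> u ` K"
    have "\<forall>k \<in> K. f (u k) = 0"
      using sum by (intro zero) (simp add: sum.reindex[OF inj])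
    with \<open>x \<in> u ` K\<close> show "f x = 0" by auto
  qed (use assms(1) in simp)
qed

lemma mem_span_imageE:
  fixes u :: "'i \<Rightarrow> 'k::field mpoly"
  assumes "finite K" "inj_on u K" "g \<in> mspace.span (u ` K)"
  obtains c where "g = (\<Sum>k \<in> K. msmult (c k) (u k))"
proof -
  obtain f where "g = (\<Sum>v \<in> u ` K. msmult (f v) v)"
    using assms(1,3) mspace.span_finite[of "u ` K"] by auto
  then have "g = (\<Sum>k \<in> K. msmult (f (u k)) (u k))"
    by (simp add: sum.reindex[OF assms(2)])
  then show thesis by (rule that)
qed


subsection \<open>Powers of the ideal (X, l) of A[X]\<close>

text \<open>For \<open>l \<in> A\<close> the \<open>n\<close>-th power of the ideal \<open>(X, l)\<close> of \<open>A[X]\<close> consists of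
  the polynomials whose coefficient of \<open>X^h\<close> is divisible by \<open>l^(n-h)\<close>; only the inclusion
  of the power in this set is needed below.\<close>
definition XL_power :: "'a::comm_semiring_1 \<Rightarrow> nat \<Rightarrow> 'a poly set" where
  "XL_power l n = {q. \<forall>h < n. l ^ (n - h) dvd coeff q h}"

lemma XL_power_add: "p \<in> XL_power l n \<Longrightarrow> q \<in> XL_power l n \<Longrightarrow> p + q \<in> XL_power l n"
  by (simp add: XL_power_def)

lemma XL_power_mult_left:
  assumes "q \<in> XL_power l n"
  shows "r * q \<in> XL_power l n"
proof -
  have "l ^ (n - h) dvd coeff r x * coeff q (h - x)" if "h < n" "x \<le> h" for h x
  proof -
    have "l ^ (n - h) dvd l ^ (n - (h - x))"
      by (rule le_imp_power_dvd) simp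
    also have "\<dots> dvd coeff q (h - x)"
    proof -
      have "h - x < n"
        using that by linarith
      with assms show ?thesis
        unfolding XL_power_def by blast
    qed
    finally show ?thesis by simp
  qed
  then show ?thesis
    by (auto simp: XL_power_def coeff_mult intro: dvd_sum)
qed

lemma XL_power_Suc_mult:
  assumes p: "p \<in> XL_power l 1" and q: "q \<in> XL_power l n"
  shows "p * q \<in> XL_power l (Suc n)"
proof -
  have "l ^ (Suc n - h) dvd coeff p x * coeff q (h - x)" if h: "h < Suc n" "x \<le> h" for h x
  proof (cases "x = 0")
    case True
    have "l dvd coeff p 0"
      using p by (simp add: XL_power_def)
    moreover have "l ^ (n - h) dvd coeff q h"
      using q h by (cases "h < n") (auto simp: XL_power_def)
    ultimately have "l * l ^ (n - h) dvd coeff p 0 * coeff q h"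
      by (rule mult_dvd_mono)
    then show ?thesis
      using True h by (simp add: Suc_diff_le)
  next
    case False
    have "l ^ (Suc n - h) dvd l ^ (n - (h - x))"
      using False h by (intro le_imp_power_dvd) auto
    also have "\<dots> dvd coeff q (h - x)"
    proof -
      have "h - x < n"
        using False h by linarith
      with q show ?thesis
        unfolding XL_power_def by blast
    qed
    finally show ?thesis by simp
  qed
  then show ?thesis
    by (auto simp: XL_power_def coeff_mult intro: dvd_sum)
qed

lemma is_ideal_preimage_XL_power:
  "is_ideal {p \<in> Rset. bivariate_eval \<sigma> p \<in> XL_power l n}"
  unfolding is_ideal_def
  by (auto simp: bivariate_eval_add bivariate_eval_mult XL_power_add XL_power_mult_left
      Rset_add Rset_mult)
    (simp add: XL_power_def)

lemma ideal_pow_subset_preimage_XL_power: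
  assumes "I \<subseteq> {p. bivariate_eval \<sigma> p \<in> XL_power l 1}" "is_ideal I"
  shows "ideal_pow I n \<subseteq> {p \<in> Rset. bivariate_eval \<sigma> p \<in> XL_power l n}"
proof (rule ideal_pow_subset_filtration[OF is_ideal_preimage_XL_power])
  show "I \<subseteq> {p \<in> Rset. bivariate_eval \<sigma> p \<in> XL_power l 1}"
    using assms by (auto simp: is_ideal_def)
  show "a * b \<in> {p \<in> Rset. bivariate_eval \<sigma> p \<in> XL_power l (Suc n)}"
    if "a \<in> {p \<in> Rset. bivariate_eval \<sigma> p \<in> XL_power l 1}"
      and "b \<in> {p \<in> Rset. bivariate_eval \<sigma> p \<in> XL_power l n}" for a b n
    using that by (simp add: bivariate_eval_mult XL_power_Suc_mult Rset_mult)
qed (auto simp: XL_power_def)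


subsection \<open>Comaximal elements\<close>

definition comaximal :: "'a::comm_ring_1 \<Rightarrow> 'a \<Rightarrow> bool" where
  "comaximal a b \<longleftrightarrow> (\<exists>u v. u * a + v * b = 1)"

lemma comaximal_sym: "comaximal a b \<Longrightarrow> comaximal b a"
  unfolding comaximal_def by (metis add.commute)

lemma comaximal_one: "comaximal a 1"
  unfolding comaximal_def by (rule exI[of _ 0], rule exI[of _ 1]) simp

lemma comaximal_mult_right:
  assumes "comaximal a b" "comaximal a c"
  shows "comaximal a (b * c)"
proof -
  obtain u v u' v' where uv: "u * a + v * b = 1" "u' * a + v' * c = 1"
    using assms unfolding comaximal_def by blast
  have "(u * u' * a + u * v' * c + v * u' * b) * a + (v * v') * (b * c)
      = (u * a + v * b) * (u' * a + v' * c)"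
    by (simp add: algebra_simps)
  also have "\<dots> = 1"
    using uv by simp
  finally show ?thesis
    unfolding comaximal_def by blast
qed

lemma comaximal_power_right: "comaximal a b \<Longrightarrow> comaximal a (b ^ n)"
  by (induction n) (simp_all add: comaximal_one comaximal_mult_right)

lemma comaximal_power: "comaximal a b \<Longrightarrow> comaximal (a ^ m) (b ^ n)"
  by (intro comaximal_power_right comaximal_sym[of b])
    (simp add: comaximal_power_right comaximal_sym)

lemma comaximal_prod_right: "(\<And>j. j \<in> A \<Longrightarrow> comaximal a (f j)) \<Longrightarrow> comaximal a (prod f A)"
  by (induction A rule: infinite_finite_induct) (simp_all add: comaximal_one comaximal_mult_right)

lemma comaximal_mult_dvd:
  assumes "comaximal a b" "a dvd q" "b dvd q"
  shows "a * b dvd q"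
proof -
  obtain u v where "u * a + v * b = 1"
    using assms(1) unfolding comaximal_def by blast
  then have "q = u * (a * q) + v * (b * q)"
    by (metis mult.assoc mult_1 distrib_right mult.commute)
  moreover have "a * b dvd a * q"
    using assms(3) by (simp add: mult_dvd_mono)
  moreover have "a * b dvd b * q"
    using assms(2) by (metis mult.commute mult_dvd_mono dvd_refl)
  ultimately show ?thesis
    by (metis dvd_add dvd_mult)
qed

lemma prod_dvd_if_pairwise_comaximal:
  assumes "finite A" "\<And>x y. x \<in> A \<Longrightarrow> y \<in> A \<Longrightarrow> x \<noteq> y \<Longrightarrow> comaximal (f x) (f y)"
    and "\<And>x. x \<in> A \<Longrightarrow> f x dvd q"
  shows "prod f A dvd q"
  using assms
proof (induction A rule: finite_induct)
  case (insert x A)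
  then have "comaximal (f x) (prod f A)"
    by (intro comaximal_prod_right) auto
  with insert show ?case
    by (simp add: comaximal_mult_dvd)
qed simp

lemma comaximal_linear_poly:
  fixes a b c d :: "'k::field"
  assumes "a * d \<noteq> b * c"
  shows "comaximal [:a, b:] [:c, d:]"
proof -
  define D where "D = a * d - b * c"
  have "smult d [:a, b:] - smult b [:c, d:] = [:D:]"
    by (simp add: D_def algebra_simps)
  then have "smult (inverse D) (smult d [:a, b:] - smult b [:c, d:]) = 1"
    using assms by (simp add: D_def one_pCons field_simps)
  then have "[:inverse D * d:] * [:a, b:] + [:- inverse D * b:] * [:c, d:] = 1"
    by (simp add: smult_diff_right algebra_simps)
  then show ?thesis
    unfolding comaximal_def by blast
qed


lemma sum_card_ge_eq_sum_min:
  fixes f :: "nat \<Rightarrow> nat"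
  shows "(\<Sum>k = 1..n. card {h. h < m \<and> f h \<ge> k}) = (\<Sum>h<m. min (f h) n)"
proof (induction n)
  case (Suc n)
  have "min (f h) (Suc n) = min (f h) n + of_bool (f h \<ge> Suc n)" for h
    by auto
  moreover have "(\<Sum>h<m. of_bool (f h \<ge> Suc n)) = card {h. h < m \<and> f h \<ge> Suc n}"
    by (simp add: lessThan_def Collect_conj_eq)
  ultimately show ?case
    using Suc by (simp add: sum.distrib)
qed simp


subsection \<open>Fat points on a ruling\<close>

text \<open>Here \<open>R1 = [a0:a1]\<close> and \<open>Q j = [B0 j:B1 j]\<close>; \<open>(d0, d1)\<close> completes \<open>(a0, a1)\<close> to a basis
  of \<open>k\<^sup>2\<close>, and \<open>w\<close> selects an affine chart of the second factor containing every \<open>Q j\<close>.\<close>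
locale fat_points_on_ruling =
  fixes a0 a1 d0 d1 w :: "'k::field" and B0 B1 :: "nat \<Rightarrow> 'k"
    and mu :: "nat \<Rightarrow> nat" and s i t :: nat
  assumes det: "a1 * d0 - a0 * d1 = 1"
    and in_chart: "\<And>j. j \<in> {1..s} \<Longrightarrow> B1 j - w * B0 j \<noteq> 0"
    and distinct_points:
      "\<And>j j'. j \<in> {1..s} \<Longrightarrow> j' \<in> {1..s} \<Longrightarrow> j \<noteq> j' \<Longrightarrow> B0 j * B1 j' \<noteq> B1 j * B0 j'"
begin

text \<open>With outer variable \<open>X\<close> and inner variable \<open>u\<close>: \<open>x0 \<mapsto> a0 + d0 X\<close>, \<open>x1 \<mapsto> a1 + d1 X\<close>,
  \<open>y0 \<mapsto> u\<close>, \<open>y1 \<mapsto> 1 + w u\<close>; this sends \<open>ell \<mapsto> X\<close>, \<open>ell' \<mapsto> 1\<close>, \<open>Y0 \<mapsto> 1\<close>, \<open>Y1 \<mapsto> u\<close>.\<close>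
definition chart :: "nat \<Rightarrow> 'k poly poly" where
  "chart v = (if v = 0 then [:[:a0:], [:d0:]:] else if v = 1 then [:[:a1:], [:d1:]:]
     else if v = 2 then [:[:0, 1:]:] else [:[:1, w:]:])"

abbreviation dehom :: "'k mpoly \<Rightarrow> 'k poly poly" where
  "dehom \<equiv> bivariate_eval chart"

definition "ell = mconst a1 * mvar 0 - mconst a0 * mvar 1"
definition "ell' = mconst d0 * mvar 1 - mconst d1 * mvar 0"
definition "Y0 = mvar 3 - mconst w * mvar 2"
definition "Y1 = mvar 2"
definition "ellQ j = mconst (B1 j) * mvar 2 - mconst (B0 j) * mvar 3"
definition "lam j = [:- B0 j, B1 j - w * B0 j:]"

definition "a h = (\<Sum>j = 1..s. mu j - h)"
definition "G h = (\<Prod>j \<in> {1..s}. ellQ j ^ (mu j - h))"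
definition "Gpoly h = (\<Prod>j \<in> {1..s}. lam j ^ (mu j - h))"

definition "std_basis h e = ell ^ h * ell' ^ (i - h) * (Y1 ^ e * Y0 ^ (t - e))"
definition "std_index = {..i} \<times> {..t}"
definition "IZ_basis h e = ell ^ h * ell' ^ (i - h) * G h * (Y1 ^ e * Y0 ^ (t - a h - e))"
definition "IZ_rows = {h. h \<le> i \<and> a h \<le> t}"
definition "IZ_index = Sigma IZ_rows (\<lambda>h. {..t - a h})"

definition "P j = point_ideal (a0, a1) (B0 j, B1 j)"
definition "IZ = fat_ideal (\<lambda>j. ((a0, a1), (B0 j, B1 j))) mu {1..s}"

abbreviation "V \<equiv> (bihom i t :: 'k mpoly set)"

lemma dehom_ell: "dehom ell = monom 1 1"
proof -
  have "dehom ell = [:[:a1 * a0 - a0 * a1:], [:a1 * d0 - a0 * d1:]:]"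
    by (simp add: ell_def bivariate_eval_diff bivariate_eval_mult bivariate_eval_mconst
        bivariate_eval_mvar chart_def)
  also have "\<dots> = monom 1 1"
    by (simp add: det monom_Suc monom_0 one_pCons)
  finally show ?thesis .
qed

lemma dehom_ell': "dehom ell' = 1"
proof -
  have "dehom ell' = [:[:d0 * a1 - d1 * a0:], [:d0 * d1 - d1 * d0:]:]"
    by (simp add: ell'_def bivariate_eval_diff bivariate_eval_mult bivariate_eval_mconst
        bivariate_eval_mvar chart_def)
  also have "\<dots> = 1"
    using det by (simp add: one_pCons algebra_simps)
  finally show ?thesis .
qed

lemma dehom_Y0: "dehom Y0 = 1"
  by (simp add: Y0_def bivariate_eval_diff bivariate_eval_mult bivariate_eval_mconst
      bivariate_eval_mvar chart_def one_pCons)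

lemma dehom_Y1: "dehom Y1 = [:monom 1 1:]"
  by (simp add: Y1_def bivariate_eval_mvar chart_def monom_Suc monom_0)

lemma dehom_ellQ: "dehom (ellQ j) = [:lam j:]"
  by (simp add: ellQ_def lam_def bivariate_eval_diff bivariate_eval_mult bivariate_eval_mconst
      bivariate_eval_mvar chart_def algebra_simps)

lemma dehom_G: "dehom (G h) = [:Gpoly h:]"
  by (simp add: G_def Gpoly_def bivariate_eval_prod bivariate_eval_power dehom_ellQ
      poly_const_pow prod_to_poly)

lemma dehom_std_basis: "dehom (std_basis h e) = monom (monom 1 e) h"
  by (simp add: std_basis_def bivariate_eval_mult bivariate_eval_power dehom_ell dehom_ell'
      dehom_Y0 dehom_Y1 poly_const_pow monom_power smult_monom)

lemma dehom_IZ_basis: "dehom (IZ_basis h e) = monom (Gpoly h * monom 1 e) h"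
  by (simp add: IZ_basis_def bivariate_eval_mult bivariate_eval_power dehom_ell dehom_ell'
      dehom_Y0 dehom_Y1 dehom_G poly_const_pow monom_power smult_monom mult.commute)


subsubsection \<open>The standard basis of \<open>R_(i,t)\<close>\<close>

lemma coeff_dehom_std_combination:
  "coeff (coeff (dehom (\<Sum>k \<in> std_index. msmult (c k) (case_prod std_basis k))) h) e
     = (if (h, e) \<in> std_index then c (h, e) else 0)"
proof -
  have "coeff (coeff (dehom (\<Sum>k \<in> std_index. msmult (c k) (case_prod std_basis k))) h) e
      = (\<Sum>k \<in> std_index. if k = (h, e) then c k else 0)"
    by (simp add: bivariate_eval_sum bivariate_eval_msmult split_def dehom_std_basis smult_monom
        coeff_sum) (auto intro!: sum.cong simp: prod_eq_iff)
  also have "\<dots> = (if (h, e) \<in> std_index then c (h, e) else 0)"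
    by (simp add: std_index_def)
  finally show ?thesis .
qed

lemma ell_bihom: "ell \<in> bihom 1 0"
  unfolding ell_def by (intro bihom_diff bihom_scaled_var)

lemma ell'_bihom: "ell' \<in> bihom 1 0"
  unfolding ell'_def by (intro bihom_diff bihom_scaled_var)

lemma Y0_bihom: "Y0 \<in> bihom 0 1"
  unfolding Y0_def by (intro bihom_diff bihom_var bihom_scaled_var)

lemma Y1_bihom: "Y1 \<in> bihom 0 1"
  unfolding Y1_def by (rule bihom_var)

lemma ellQ_bihom: "ellQ j \<in> bihom 0 1"
  unfolding ellQ_def by (intro bihom_diff bihom_scaled_var)

lemma G_bihom: "G h \<in> bihom 0 (a h)"
  unfolding G_def a_def by (rule bihom_prod) (use bihom_power[OF ellQ_bihom] in simp)

lemma x_part_bihom: "h \<le> i \<Longrightarrow> ell ^ h * ell' ^ (i - h) \<in> bihom i 0"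
  by (rule bihom_mult[OF bihom_power[OF ell_bihom] bihom_power[OF ell'_bihom]]) auto

lemma y_part_bihom: "e \<le> n \<Longrightarrow> Y1 ^ e * Y0 ^ (n - e) \<in> bihom 0 n"
  by (rule bihom_mult[OF bihom_power[OF Y1_bihom] bihom_power[OF Y0_bihom]]) auto

lemma std_basis_mem_V: "(h, e) \<in> std_index \<Longrightarrow> std_basis h e \<in> V"
  unfolding std_basis_def std_index_def by (rule bihom_mult[OF x_part_bihom y_part_bihom]) auto

lemma std_basis_independent:
  "inj_on (case_prod std_basis) std_index \<and> mspace.independent (case_prod std_basis ` std_index)"
proof (rule inj_on_independent_if_scalars_zero)
  fix c assume zero: "(\<Sum>k \<in> std_index. msmult (c k) (case_prod std_basis k)) = 0"
  show "\<forall>k \<in> std_index. c k = 0"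
  proof
    fix k assume "k \<in> std_index"
    then show "c k = 0"
      using coeff_dehom_std_combination[of c "fst k" "snd k"] by (simp add: zero)
  qed
qed (simp add: std_index_def)

lemma x_vars_mem_span: "mvar 0 \<in> mspace.span {ell, ell'}" "mvar 1 \<in> mspace.span {ell, ell'}"
proof -
  have "msmult d0 ell + msmult a0 ell' = mconst (a1 * d0 - a0 * d1) * mvar 0"
    and "msmult d1 ell + msmult a1 ell' = mconst (a1 * d0 - a0 * d1) * mvar 1"
    by (simp_all add: msmult_eq_mconst_mult ell_def ell'_def mconst_mult mconst_diff algebra_simps)
  then have "mvar 0 = msmult d0 ell + msmult a0 ell'" "mvar 1 = msmult d1 ell + msmult a1 ell'"
    by (simp_all add: det)
  then show "mvar 0 \<in> mspace.span {ell, ell'}" "mvar 1 \<in> mspace.span {ell, ell'}"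
    by (metis insertCI mspace.span_add mspace.span_base mspace.span_scale)+
qed

lemma y_vars_mem_span: "mvar 2 \<in> mspace.span {Y1, Y0}" "mvar 3 \<in> mspace.span {Y1, Y0}"
proof -
  have "mvar 3 = Y0 + msmult w Y1"
    by (simp add: Y0_def Y1_def msmult_eq_mconst_mult)
  then show "mvar 3 \<in> mspace.span {Y1, Y0}"
    by (metis insertCI mspace.span_add mspace.span_base mspace.span_scale)
qed (simp add: Y1_def mspace.span_base)

lemma monomial_mem_span_std_basis:
  assumes "has_bidegree i t mon"
  shows "Poly_Mapping.single mon 1 \<in> mspace.span (case_prod std_basis ` std_index)"
proof -
  let ?e = "Poly_Mapping.lookup mon"
  have keys: "Poly_Mapping.keys mon \<subseteq> {0, 1, 2, 3}" and "?e 0 + ?e 1 = i" "?e 2 + ?e 3 = t"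
    using assms by (auto simp: has_bidegree_def)
  then have X: "mvar 0 ^ ?e 0 * mvar 1 ^ ?e 1 \<in> mspace.span (binary_monomials ell ell' i)"
    and Y: "mvar 2 ^ ?e 2 * mvar 3 ^ ?e 3 \<in> mspace.span (binary_monomials Y1 Y0 t)"
    using power_mult_power_mem_span_binary_monomials[OF x_vars_mem_span, of "?e 0" "?e 1"]
      power_mult_power_mem_span_binary_monomials[OF y_vars_mem_span, of "?e 2" "?e 3"] by simp_all
  show ?thesis
    unfolding monomial_eq_prod_mvar_powers[OF keys]
  proof (rule span_mult[OF _ X Y])
    fix x y assume "x \<in> binary_monomials ell ell' i" "y \<in> binary_monomials Y1 Y0 t"
    then obtain h e where "h \<le> i" "e \<le> t" "x * y = std_basis h e"
      by (auto simp: binary_monomials_def std_basis_def)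
    then show "x * y \<in> mspace.span (case_prod std_basis ` std_index)"
      by (intro mspace.span_base) (force simp: std_index_def)
  qed
qed

lemma V_subset_span_std_basis: "V \<subseteq> mspace.span (case_prod std_basis ` std_index)"
proof
  fix f :: "'k mpoly" assume "f \<in> V"
  have "f = (\<Sum>mon \<in> Poly_Mapping.keys f.
      msmult (Poly_Mapping.lookup f mon) (Poly_Mapping.single mon 1))"
    by (subst sum_single_lookup) (simp add: msmult_def)
  also have "\<dots> \<in> mspace.span (case_prod std_basis ` std_index)"
    using \<open>f \<in> V\<close> by (intro mspace.span_sum mspace.span_scale monomial_mem_span_std_basis)
      (auto simp: bihom_eq)
  finally show "f \<in> mspace.span (case_prod std_basis ` std_index)" .
qed

lemma dim_V: "mspace.dim V = (i + 1) * (t + 1)"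
proof -
  have "case_prod std_basis ` std_index \<subseteq> V"
    using std_basis_mem_V by auto
  then have "mspace.dim V = card (case_prod std_basis ` std_index)"
    using mspace.basis_card_eq_dim[OF _ V_subset_span_std_basis] std_basis_independent by simp
  also have "\<dots> = card std_index"
    using std_basis_independent card_image by blast
  finally show ?thesis
    by (simp add: std_index_def card_cartesian_product)
qed

lemma V_std_combinationE:
  assumes "f \<in> V"
  obtains c where "f = (\<Sum>k \<in> std_index. msmult (c k) (case_prod std_basis k))"
proof -
  have "f \<in> mspace.span (case_prod std_basis ` std_index)" "finite std_index"
    using assms V_subset_span_std_basis by (auto simp: std_index_def)
  then show thesis
    using that mem_span_imageE std_basis_independent by blast
qed

lemma coeff_coeff_dehom_V:
  assumes "f \<in> V" "(h, e) \<notin> std_index"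
  shows "coeff (coeff (dehom f) h) e = 0"
  using coeff_dehom_std_combination assms by (metis V_std_combinationE)

lemma dehom_injective_on_V:
  assumes "f \<in> V" "dehom f = 0"
  shows "f = 0"
proof -
  obtain c where c: "f = (\<Sum>k \<in> std_index. msmult (c k) (case_prod std_basis k))"
    using V_std_combinationE assms(1) .
  have "c k = 0" if "k \<in> std_index" for k
    using coeff_dehom_std_combination[of c "fst k" "snd k"] assms(2) c that by simp
  then show ?thesis
    using c by simp
qed


subsubsection \<open>The forms of \<open>I_Z\<close> in \<open>R_(i,t)\<close>\<close>

lemma P_eq_gen_ideal: "P j = gen_ideal {ell, ellQ j}"
  by (simp add: P_def point_ideal_def ell_def ellQ_def)

lemma is_ideal_P: "is_ideal (P j)"
  unfolding P_eq_gen_ideal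
  by (rule is_ideal_gen_ideal) (use ell_bihom ellQ_bihom bihom_subset_Rset in blast)

lemma IZ_eq: "IZ = Rset \<inter> (\<Inter>j \<in> {1..s}. ideal_pow (P j) (mu j))"
  by (simp add: IZ_def fat_ideal_def P_def)

lemma finite_IZ_rows: "finite IZ_rows"
  by (rule finite_subset[of _ "{..i}"]) (auto simp: IZ_rows_def)

lemma finite_IZ_index: "finite IZ_index"
  by (simp add: IZ_index_def finite_IZ_rows)

lemma IZ_basis_mem_V:
  assumes "(h, e) \<in> IZ_index"
  shows "IZ_basis h e \<in> V"
proof -
  have "h \<le> i" "a h \<le> t" "e \<le> t - a h"
    using assms by (auto simp: IZ_index_def IZ_rows_def)
  then have "ell ^ h * ell' ^ (i - h) * G h \<in> bihom i (a h)"
    by (intro bihom_mult[OF x_part_bihom G_bihom]) auto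
  then show ?thesis
    unfolding IZ_basis_def using \<open>a h \<le> t\<close> \<open>e \<le> t - a h\<close>
    by (intro bihom_mult[OF _ y_part_bihom]) auto
qed

lemma IZ_basis_mem_IZ:
  assumes "(h, e) \<in> IZ_index"
  shows "IZ_basis h e \<in> IZ"
proof -
  have "IZ_basis h e \<in> ideal_pow (P j) (mu j)" if j: "j \<in> {1..s}" for j
  proof -
    define rest where "rest = ell' ^ (i - h) * (\<Prod>j' \<in> {1..s} - {j}. ellQ j' ^ (mu j' - h))
      * (Y1 ^ e * Y0 ^ (t - a h - e))"
    have "IZ_basis h e = (ell ^ h * ellQ j ^ (mu j - h)) * rest"
      using prod.remove[of "{1..s}" j "\<lambda>j. ellQ j ^ (mu j - h)"] j
      by (simp add: IZ_basis_def G_def rest_def mult_ac)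
    moreover have "ell ^ h * ellQ j ^ (mu j - h) \<in> ideal_pow (P j) (h + (mu j - h))"
      by (rule power_mult_power_mem_ideal_pow)
        (simp_all add: P_eq_gen_ideal gen_ideal_subset[THEN subsetD])
    moreover have "ideal_pow (P j) (h + (mu j - h)) \<subseteq> ideal_pow (P j) (mu j)"
      by (rule ideal_pow_antimono[OF is_ideal_P]) simp
    moreover have "rest \<in> Rset"
      unfolding rest_def
      using bihom_subset_Rset ell'_bihom ellQ_bihom Y0_bihom Y1_bihom
      by (blast intro: Rset_mult Rset_power Rset_prod)
    ultimately show ?thesis
      using is_ideal_ideal_pow[OF is_ideal_P] by (auto simp: is_ideal_def mult.commute)
  qed
  moreover have "IZ_basis h e \<in> Rset"
    using IZ_basis_mem_V[OF assms] bihom_subset_Rset by blast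
  ultimately show ?thesis
    by (simp add: IZ_eq)
qed

lemma ideal_pow_P_subset_preimage: "ideal_pow (P j) n \<subseteq> {p \<in> Rset. dehom p \<in> XL_power (lam j) n}"
proof (rule ideal_pow_subset_preimage_XL_power[OF _ is_ideal_P])
  have "{ell, ellQ j} \<subseteq> {p \<in> Rset. dehom p \<in> XL_power (lam j) 1}"
    using ell_bihom ellQ_bihom bihom_subset_Rset by (auto simp: XL_power_def dehom_ell dehom_ellQ)
  then show "P j \<subseteq> {p. dehom p \<in> XL_power (lam j) 1}"
    unfolding P_eq_gen_ideal using gen_ideal_least[OF is_ideal_preimage_XL_power] by blast
qed

lemma lam_power_dvd_coeff_dehom:
  assumes "f \<in> IZ" "j \<in> {1..s}"
  shows "lam j ^ (mu j - h) dvd coeff (dehom f) h"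
proof (cases "h < mu j")
  case True
  have "f \<in> ideal_pow (P j) (mu j)"
    using assms by (simp add: IZ_eq)
  then show ?thesis
    using ideal_pow_P_subset_preimage True by (auto simp: XL_power_def)
qed simp

lemma comaximal_lam: "j \<in> {1..s} \<Longrightarrow> j' \<in> {1..s} \<Longrightarrow> j \<noteq> j' \<Longrightarrow> comaximal (lam j) (lam j')"
  unfolding lam_def using distinct_points
  by (intro comaximal_linear_poly) (auto simp: algebra_simps)

lemma Gpoly_dvd_coeff_dehom: "f \<in> IZ \<Longrightarrow> Gpoly h dvd coeff (dehom f) h"
  unfolding Gpoly_def using lam_power_dvd_coeff_dehom comaximal_lam
  by (intro prod_dvd_if_pairwise_comaximal) (auto intro: comaximal_power)

lemma Gpoly_nonzero: "Gpoly h \<noteq> 0"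
  using in_chart by (auto simp: Gpoly_def lam_def)

lemma degree_Gpoly: "degree (Gpoly h) = a h"
  unfolding Gpoly_def a_def using in_chart
  by (subst degree_prod_eq_sum_degree) (auto simp: lam_def degree_power_eq)

lemma coeff_dehom_IZ_combination:
  "coeff (dehom (\<Sum>k \<in> IZ_index. msmult (c k) (case_prod IZ_basis k))) h =
    (if h \<in> IZ_rows then Gpoly h * (\<Sum>e \<le> t - a h. monom (c (h, e)) e) else 0)"
proof -
  have "coeff (dehom (\<Sum>k \<in> IZ_index. msmult (c k) (case_prod IZ_basis k))) h
      = (\<Sum>k \<in> IZ_index. if fst k = h then Gpoly h * monom (c k) (snd k) else 0)"
    by (simp add: bivariate_eval_sum bivariate_eval_msmult split_def dehom_IZ_basis smult_monom
        coeff_sum flip: mult_smult_right) (auto intro!: sum.cong)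
  also have "\<dots> = (\<Sum>h' \<in> IZ_rows. \<Sum>e \<le> t - a h'.
      if h' = h then Gpoly h * monom (c (h', e)) e else 0)"
    unfolding IZ_index_def
    by (subst sum.Sigma) (use finite_IZ_rows in \<open>auto intro!: sum.cong simp: split_def\<close>)
  also have "\<dots> = (\<Sum>h' \<in> IZ_rows.
      if h' = h then Gpoly h * (\<Sum>e \<le> t - a h. monom (c (h, e)) e) else 0)"
    by (intro sum.cong refl) (auto simp: sum_distrib_left)
  also have "\<dots> = (if h \<in> IZ_rows then Gpoly h * (\<Sum>e \<le> t - a h. monom (c (h, e)) e) else 0)"
    using finite_IZ_rows by simp
  finally show ?thesis .
qed

lemma IZ_basis_independent:
  "inj_on (case_prod IZ_basis) IZ_index \<and> mspace.independent (case_prod IZ_basis ` IZ_index)"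
proof (rule inj_on_independent_if_scalars_zero[OF finite_IZ_index])
  fix c assume zero: "(\<Sum>k \<in> IZ_index. msmult (c k) (case_prod IZ_basis k)) = 0"
  show "\<forall>k \<in> IZ_index. c k = 0"
  proof
    fix k assume "k \<in> IZ_index"
    then obtain h e where k: "k = (h, e)" "h \<in> IZ_rows" "e \<le> t - a h"
      by (auto simp: IZ_index_def)
    have "Gpoly h * (\<Sum>e \<le> t - a h. monom (c (h, e)) e) = 0"
      using coeff_dehom_IZ_combination[of c h] zero k(2) by simp
    then have "(\<Sum>e \<le> t - a h. monom (c (h, e)) e) = 0"
      using Gpoly_nonzero by simp
    then have "coeff (\<Sum>e \<le> t - a h. monom (c (h, e)) e) e = 0"
      by simp
    then show "c k = 0"
      using k by (simp add: coeff_sum)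
  qed
qed

lemma span_IZ_basis_subset_V: "mspace.span (case_prod IZ_basis ` IZ_index) \<subseteq> V"
  by (rule mspace.span_minimal) (use IZ_basis_mem_V subspace_bihom in auto)

lemma coeff_dehom_V_inter_IZE:
  assumes "f \<in> V \<inter> IZ"
  obtains r where "\<And>h. coeff (dehom f) h = Gpoly h * r h"
    and "\<And>h. degree (r h) \<le> t - a h" and "\<And>h. h \<notin> IZ_rows \<Longrightarrow> r h = 0"
proof -
  let ?q = "\<lambda>h. coeff (dehom f) h"
  have deg_q: "degree (?q h) \<le> t" for h
    using assms coeff_coeff_dehom_V by (intro degree_le) (auto simp: std_index_def)
  have q_eq_0: "?q h = 0" if "h > i" for h
    using assms coeff_coeff_dehom_V that by (intro poly_eqI) (auto simp: std_index_def)
  have "\<forall>h. \<exists>r. ?q h = Gpoly h * r"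
    using Gpoly_dvd_coeff_dehom assms by (auto simp: dvd_def)
  then obtain r where r: "\<And>h. ?q h = Gpoly h * r h"
    by metis
  have "degree (?q h) = a h + degree (r h)" if "r h \<noteq> 0" for h
    using r[of h] that Gpoly_nonzero by (simp add: degree_mult_eq degree_Gpoly)
  then have deg_r: "degree (r h) \<le> t - a h" and "a h > t \<Longrightarrow> r h = 0" for h
    using deg_q[of h] by (cases "r h = 0"; force)+
  moreover have "h > i \<Longrightarrow> r h = 0" for h
    using q_eq_0 r Gpoly_nonzero by (metis mult_eq_0_iff)
  ultimately have "r h = 0" if "h \<notin> IZ_rows" for h
    using that by (auto simp: IZ_rows_def not_le)
  with r deg_r show thesis
    by (rule that)
qed

lemma V_inter_IZ_subset_span_IZ_basis: "V \<inter> IZ \<subseteq> mspace.span (case_prod IZ_basis ` IZ_index)"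
proof
  fix f assume f: "f \<in> V \<inter> IZ"
  then obtain r where r: "\<And>h. coeff (dehom f) h = Gpoly h * r h"
    and deg_r: "\<And>h. degree (r h) \<le> t - a h" and r_eq_0: "\<And>h. h \<notin> IZ_rows \<Longrightarrow> r h = 0"
    using coeff_dehom_V_inter_IZE by blast
  define f' where "f' = (\<Sum>k \<in> IZ_index. msmult (coeff (r (fst k)) (snd k)) (case_prod IZ_basis k))"
  have f'_span: "f' \<in> mspace.span (case_prod IZ_basis ` IZ_index)"
    unfolding f'_def by (intro mspace.span_sum mspace.span_scale mspace.span_base) auto
  have "coeff (dehom f') h = coeff (dehom f) h" for h
    unfolding f'_def coeff_dehom_IZ_combination r
    using poly_as_sum_of_monoms'[OF deg_r] r_eq_0 by simp
  then have "dehom (f - f') = 0"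
    by (simp add: bivariate_eval_diff poly_eqI)
  moreover have "f - f' \<in> V"
    using f f'_span span_IZ_basis_subset_V by (blast intro: bihom_diff)
  ultimately have "f - f' = 0"
    by (rule dehom_injective_on_V[rotated])
  with f'_span show "f \<in> mspace.span (case_prod IZ_basis ` IZ_index)"
    by simp
qed

lemma dim_V_inter_IZ: "mspace.dim (V \<inter> IZ) = (\<Sum>h \<in> IZ_rows. t + 1 - a h)"
proof -
  have "case_prod IZ_basis ` IZ_index \<subseteq> V \<inter> IZ"
    using IZ_basis_mem_V IZ_basis_mem_IZ by auto
  then have "mspace.dim (V \<inter> IZ) = card (case_prod IZ_basis ` IZ_index)"
    using mspace.basis_card_eq_dim[OF _ V_inter_IZ_subset_span_IZ_basis] IZ_basis_independent
    by simp
  also have "\<dots> = card IZ_index"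
    using IZ_basis_independent card_image by blast
  also have "\<dots> = (\<Sum>h \<in> IZ_rows. t + 1 - a h)"
    unfolding IZ_index_def using finite_IZ_rows by (simp add: card_SigmaI IZ_rows_def Suc_diff_le)
  finally show ?thesis .
qed

lemma hilbert_fun_IZ: "hilbert_fun IZ i t = (\<Sum>h \<le> i. min (a h) (t + 1))"
proof -
  have "mspace.dim (V \<inter> IZ) = (\<Sum>h \<le> i. if a h \<le> t then t + 1 - a h else 0)"
    unfolding dim_V_inter_IZ IZ_rows_def by (rule sum.inter_filter[of "{..i}", simplified])
  then have "(\<Sum>h \<le> i. min (a h) (t + 1)) + mspace.dim (V \<inter> IZ) = (\<Sum>h \<le> i. t + 1)"
    by (simp only: sum.distrib[symmetric]) (rule sum.cong; auto)
  then show ?thesis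
    unfolding hilbert_fun_def dim_V by simp
qed

lemma a_eq_0:
  assumes "Max (mu ` {1..s}) \<le> h"
  shows "a h = 0"
  unfolding a_def
proof (intro sum.neutral ballI)
  fix j assume "j \<in> {1..s}"
  then have "mu j \<le> Max (mu ` {1..s})"
    by (intro Max_ge) auto
  with assms show "mu j - h = 0"
    by simp
qed

lemma hilbert_fun_IZ_eq_sum_card:
  assumes "Max (mu ` {1..s}) \<le> i + 1"
  shows "hilbert_fun IZ i t = (\<Sum>k = 1..t + 1. card {h. h < Max (mu ` {1..s}) \<and> a h \<ge> k})"
proof -
  have "hilbert_fun IZ i t = (\<Sum>h \<le> i. min (a h) (t + 1))"
    by (rule hilbert_fun_IZ)
  also have "\<dots> = (\<Sum>h < Max (mu ` {1..s}). min (a h) (t + 1))"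
    by (rule sum.mono_neutral_right) (use assms a_eq_0 in auto)
  also have "\<dots> = (\<Sum>k = 1..t + 1. card {h. h < Max (mu ` {1..s}) \<and> a h \<ge> k})"
    by (rule sum_card_ge_eq_sum_min[symmetric])
  finally show ?thesis .
qed

end


subsection \<open>Choice of coordinates\<close>

lemma infinite_UNIV_alg_closed: "infinite (UNIV :: 'k::alg_closed_field set)"
proof
  assume fin: "finite (UNIV :: 'k set)"
  define p :: "'k poly" where "p = (\<Prod>x \<in> UNIV. [:- x, 1:])"
  have "degree p = card (UNIV :: 'k set)"
    unfolding p_def by (subst degree_prod_eq_sum_degree) auto
  then have "degree (p + 1) > 0"
    using fin by (simp add: degree_add_eq_left card_gt_0_iff)
  then obtain x where "poly (p + 1) x = 0"
    using alg_closed_imp_poly_has_root by blast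
  moreover have "poly p x = 0"
    unfolding p_def poly_prod using fin by (intro prod_zero) auto
  ultimately show False
    by simp
qed

lemma exists_det_eq_1:
  fixes a0 a1 :: "'k::field"
  assumes "(a0, a1) \<noteq> (0, 0)"
  obtains d0 d1 where "a1 * d0 - a0 * d1 = 1"
proof (cases "a1 = 0")
  case True
  with assms show ?thesis
    by (intro that[of 0 "- inverse a0"]) simp
next
  case False
  then show ?thesis
    by (intro that[of "inverse a1" 0]) simp
qed

lemma exists_affine_chart:
  fixes u v :: "'i \<Rightarrow> 'k::field"
  assumes "infinite (UNIV :: 'k set)" "finite A" "\<And>j. j \<in> A \<Longrightarrow> (u j, v j) \<noteq> (0, 0)"
  obtains w where "\<And>j. j \<in> A \<Longrightarrow> v j - w * u j \<noteq> 0"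
proof -
  obtain w where w: "w \<notin> (\<lambda>j. v j / u j) ` A"
    using ex_new_if_finite[OF assms(1)] assms(2) by blast
  have "v j - w * u j \<noteq> 0" if "j \<in> A" for j
  proof (cases "u j = 0")
    case False
    have "w \<noteq> v j / u j"
      using w that by auto
    with False show ?thesis
      by (auto simp: field_simps)
  qed (use assms(3)[OF that] in simp)
  then show thesis
    by (rule that)
qed

theorem corollary2p3:
  fixes R1 :: "'k::alg_closed_field \<times> 'k"
    and Q :: "nat \<Rightarrow> 'k \<times> 'k"
    and mu :: "nat \<Rightarrow> nat"
    and s t i :: nat
  assumes "R1 \<noteq> (0, 0)"
    and "\<forall>j\<in>{1..s}. Q j \<noteq> (0, 0)"
    and "\<forall>j\<in>{1..s}. \<forall>j'\<in>{1..s}. j \<noteq> j' \<longrightarrow> \<not> proj_eq (Q j) (Q j')"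
    and "\<forall>j\<in>{1..s}. mu j \<ge> 1"
    and "s \<ge> 1"
    and "i \<ge> Max (mu ` {1..s}) - 1"
  shows "hilbert_fun (fat_ideal (\<lambda>j. (R1, Q j)) mu {1..s}) i t =
    (\<Sum>k = 1..t+1. card {h. h < Max (mu ` {1..s}) \<and>
        (\<Sum>j = 1..s. mu j - h) \<ge> k})"
proof -
  obtain a0 a1 where R1: "R1 = (a0, a1)"
    by (cases R1)
  obtain d0 d1 where det: "a1 * d0 - a0 * d1 = 1"
    using exists_det_eq_1 assms(1) R1 by blast
  obtain w where chart: "\<And>j. j \<in> {1..s} \<Longrightarrow> snd (Q j) - w * fst (Q j) \<noteq> 0"
    using exists_affine_chart[OF infinite_UNIV_alg_closed,
        where A = "{1..s}" and u = "\<lambda>j. fst (Q j)" and v = "\<lambda>j. snd (Q j)"] assms(2)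
    by auto
  interpret fat_points_on_ruling a0 a1 d0 d1 w "\<lambda>j. fst (Q j)" "\<lambda>j. snd (Q j)" mu s i t
    using det chart assms(3) by unfold_locales (auto simp: proj_eq_def)
  have "fat_ideal (\<lambda>j. (R1, Q j)) mu {1..s} = IZ"
    by (simp add: IZ_def R1)
  moreover have "Max (mu ` {1..s}) \<le> i + 1"
    using assms(6) by simp
  ultimately show ?thesis
    using hilbert_fun_IZ_eq_sum_card by (simp add: a_def)
qed

end
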